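(* For every $n\ge 4$, $\beta(P_{2\infty}\,\Box\, K_n)=n-1$, and $S=\{(0,0),(1,1),(2,2),\dots,(n-2,n-2)\}$ is a metric basis of $P_{2\infty}\,\Box\, K_n$.
   Context: $P_{2\infty}$ has vertex set $\mathbb Z$ with $i,j$ adjacent iff $|i-j|=1$. $K_n$ is the complete graph on vertex set $\{0,1,\dots,n-1\}$. The cartesian product $G\Box H$ has vertex set $V(G)\times V(H)$, where $(a,v)$ is adjacent to $(b,w)$ iff either $a=b$ and $vw\in E(H)$, or $v=w$ and $ab\in E(G)$. A vertex $x$ resolves $u,v$ if $d(u,x)\ne d(v,x)$ (shortest-path distance); a resolving set is a set of vertices resolving every pair of distinct vertices; $\beta$ is the minimum cardinality of a resolving set ($\infty$ if none is finite), and a metric basis is a resolving set of cardinality $\beta$. *)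

theory Defs
  imports Main "HOL-Library.Extended_Nat"
begin

text \<open>A (simple, possibly infinite) graph is given by a vertex set V and a symmetric
  adjacency relation E on V.\<close>

definition gdist :: "('a \<Rightarrow> 'a \<Rightarrow> bool) \<Rightarrow> 'a \<Rightarrow> 'a \<Rightarrow> nat" where
  "gdist E u v = (LEAST k. (E ^^ k) u v)"

definition resolves :: "('a \<Rightarrow> 'a \<Rightarrow> bool) \<Rightarrow> 'a \<Rightarrow> 'a \<Rightarrow> 'a \<Rightarrow> bool" where
  "resolves E x u v \<longleftrightarrow> gdist E u x \<noteq> gdist E v x"

definition resolving_set :: "'a set \<Rightarrow> ('a \<Rightarrow> 'a \<Rightarrow> bool) \<Rightarrow> 'a set \<Rightarrow> bool" where
  "resolving_set V E S \<longleftrightarrow> S \<subseteq> V \<and>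
     (\<forall>u\<in>V. \<forall>v\<in>V. u \<noteq> v \<longrightarrow> (\<exists>x\<in>S. resolves E x u v))"

text \<open>Metric dimension: minimum cardinality of a finite resolving set; \<infinity> if none exists.\<close>
definition metric_dim :: "'a set \<Rightarrow> ('a \<Rightarrow> 'a \<Rightarrow> bool) \<Rightarrow> enat" where
  "metric_dim V E = (INF S \<in> {S. resolving_set V E S \<and> finite S}. enat (card S))"

definition metric_basis :: "'a set \<Rightarrow> ('a \<Rightarrow> 'a \<Rightarrow> bool) \<Rightarrow> 'a set \<Rightarrow> bool" where
  "metric_basis V E S \<longleftrightarrow> resolving_set V E S \<and> finite S \<and> enat (card S) = metric_dim V E"

definition cprod_V :: "'a set \<Rightarrow> 'b set \<Rightarrow> ('a \<times> 'b) set" where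
  "cprod_V VG VH = VG \<times> VH"

definition cprod_E :: "'a set \<Rightarrow> ('a \<Rightarrow> 'a \<Rightarrow> bool) \<Rightarrow> 'b set \<Rightarrow> ('b \<Rightarrow> 'b \<Rightarrow> bool)
    \<Rightarrow> ('a \<times> 'b) \<Rightarrow> ('a \<times> 'b) \<Rightarrow> bool" where
  "cprod_E VG EG VH EH p q \<longleftrightarrow> p \<in> VG \<times> VH \<and> q \<in> VG \<times> VH \<and>
     ((fst p = fst q \<and> EH (snd p) (snd q)) \<or> (snd p = snd q \<and> EG (fst p) (fst q)))"

definition P2inf_V :: "int set" where "P2inf_V = UNIV"
definition P2inf_E :: "int \<Rightarrow> int \<Rightarrow> bool" where "P2inf_E i j \<longleftrightarrow> \<bar>i - j\<bar> = 1"

definition K_V :: "nat \<Rightarrow> nat set" where "K_V n = {0..<n}"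
definition K_E :: "nat \<Rightarrow> nat \<Rightarrow> nat \<Rightarrow> bool" where
  "K_E n v w \<longleftrightarrow> v < n \<and> w < n \<and> v \<noteq> w"

end

theory Submission
  imports Defs
begin

(* Write a vertex of P_{2\<infinity>} \<box> K_n as (a, v) with a \<in> \<int> (the layer) and v < n
   (the column).  The distance between (a, v) and (b, w) is |a - b| + [v \<noteq> w]:
   a potential argument bounds walks from below, and an explicit walk along the
   path followed by one column step attains the bound.

   Lower bound: two vertices (0, v), (0, w) of the same layer whose columns contain
   no landmark are equidistant from every landmark, so a resolving set S must meet
   all but at most one of the n columns, whence |S| \<ge> n - 1.
   Upper bound: for the diagonal S = {(i, i) | i \<le> n - 2} two vertices in the same
   layer are separated by the landmark in the column of one of them, and two
   vertices in different layers are already separated by the three landmarks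
   (0,0), (1,1), (2,2) (this is where n \<ge> 4 is used). *)

lemma gdist_eqI:
  assumes "(E ^^ k) u v" and "\<And>m. (E ^^ m) u v \<Longrightarrow> k \<le> m"
  shows "gdist E u v = k"
  unfolding gdist_def using assms by (rule Least_equality)

lemma relpowp_potential_bound:
  fixes f :: "'a \<Rightarrow> nat"
  assumes step: "\<And>x y. E x y \<Longrightarrow> f y \<le> f x + 1"
  shows "(E ^^ k) u v \<Longrightarrow> f v \<le> f u + k"
proof (induction k arbitrary: v)
  case 0
  then show ?case by simp
next
  case (Suc k)
  then obtain y where walk: "(E ^^ k) u y" and edge: "E y v" by (auto elim: relpowp_Suc_E)
  have "f y \<le> f u + k" using Suc.IH walk .
  moreover have "f v \<le> f y + 1" using step edge .
  ultimately show ?case by simp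
qed

lemma metric_basisI:
  assumes res: "resolving_set V E S" and fin: "finite S"
    and minimal: "\<And>T. resolving_set V E T \<Longrightarrow> finite T \<Longrightarrow> card S \<le> card T"
  shows "metric_dim V E = enat (card S) \<and> metric_basis V E S"
proof -
  have "metric_dim V E = enat (card S)"
    unfolding metric_dim_def
  proof (rule antisym)
    show "(INF T\<in>{T. resolving_set V E T \<and> finite T}. enat (card T)) \<le> enat (card S)"
      using res fin by (intro INF_lower2[of S]) auto
    show "enat (card S) \<le> (INF T\<in>{T. resolving_set V E T \<and> finite T}. enat (card T))"
      using minimal by (intro INF_greatest) auto
  qed
  then show ?thesis using res fin by (simp add: metric_basis_def)
qed

abbreviation PK_V :: "nat \<Rightarrow> (int \<times> nat) set" where
  "PK_V n \<equiv> cprod_V P2inf_V (K_V n)"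

abbreviation PK_E :: "nat \<Rightarrow> int \<times> nat \<Rightarrow> int \<times> nat \<Rightarrow> bool" where
  "PK_E n \<equiv> cprod_E P2inf_V P2inf_E (K_V n) (K_E n)"

lemma PK_V_iff: "p \<in> PK_V n \<longleftrightarrow> snd p < n"
  by (cases p) (simp add: cprod_V_def P2inf_V_def K_V_def)

lemma PK_E_iff: "PK_E n p q \<longleftrightarrow> snd p < n \<and> snd q < n \<and>
   ((fst p = fst q \<and> snd p \<noteq> snd q) \<or> (snd p = snd q \<and> \<bar>fst p - fst q\<bar> = 1))"
  by (cases p; cases q) (auto simp: cprod_E_def P2inf_V_def P2inf_E_def K_V_def K_E_def)

definition pk_dist :: "int \<times> nat \<Rightarrow> int \<times> nat \<Rightarrow> nat" where
  "pk_dist p q = nat \<bar>fst p - fst q\<bar> + (if snd p = snd q then 0 else 1)"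

lemma PK_walk_in_column:
  assumes "v < n"
  shows "nat \<bar>a - b\<bar> = k \<Longrightarrow> (PK_E n ^^ k) (a, v) (b, v)"
proof (induction k arbitrary: b)
  case 0
  then show ?case by simp
next
  case (Suc k)
  define b' where "b' = (if a < b then b - 1 else b + 1)"
  have "nat \<bar>a - b'\<bar> = k" using Suc.prems by (auto simp: b'_def)
  then have "(PK_E n ^^ k) (a, v) (b', v)" by (rule Suc.IH)
  moreover have "PK_E n (b', v) (b, v)" using assms by (auto simp: PK_E_iff b'_def)
  ultimately show ?case by (rule relpowp_Suc_I)
qed

lemma PK_walk:
  assumes "v < n" and "w < n"
  shows "(PK_E n ^^ pk_dist (a, v) (b, w)) (a, v) (b, w)"
proof (cases "v = w")
  case True
  then show ?thesis using PK_walk_in_column[OF assms(1)] by (simp add: pk_dist_def)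
next
  case False
  have "(PK_E n ^^ nat \<bar>a - b\<bar>) (a, v) (b, v)" using PK_walk_in_column[OF assms(1)] by simp
  moreover have "PK_E n (b, v) (b, w)" using assms False by (simp add: PK_E_iff)
  ultimately have "(PK_E n ^^ Suc (nat \<bar>a - b\<bar>)) (a, v) (b, w)" by (rule relpowp_Suc_I)
  then show ?thesis using False by (simp add: pk_dist_def)
qed

lemma gdist_PK:
  assumes "p \<in> PK_V n" and "q \<in> PK_V n"
  shows "gdist (PK_E n) p q = pk_dist p q"
proof (rule gdist_eqI)
  show "(PK_E n ^^ pk_dist p q) p q"
    using assms PK_walk[of "snd p" n "snd q" "fst p" "fst q"] by (simp add: PK_V_iff)
  have step: "pk_dist p y \<le> pk_dist p x + 1" if "PK_E n x y" for x y
    using that unfolding PK_E_iff pk_dist_def by auto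
  fix m assume "(PK_E n ^^ m) p q"
  from relpowp_potential_bound[of "PK_E n" "pk_dist p", OF step this]
  show "pk_dist p q \<le> m" by (simp add: pk_dist_def)
qed

definition diagonal :: "nat \<Rightarrow> (int \<times> nat) set" where
  "diagonal n = {(int i, i) | i. i \<le> n - 2}"

lemma diagonal_image: "diagonal n = (\<lambda>i. (int i, i)) ` {..n - 2}"
  by (auto simp: diagonal_def)

lemma card_diagonal: "n \<ge> 2 \<Longrightarrow> card (diagonal n) = n - 1"
  unfolding diagonal_image by (subst card_image) (auto simp: inj_on_def)

text \<open>The function i \<mapsto> |a - i| + c_i on {0,1,2}, where the 0/1 corrections c_i
  vanish at most once, determines a.\<close>
lemma layer_determined:
  fixes a b c0 c1 c2 d0 d1 d2 :: int
  assumes "c0 \<in> {0,1}" "c1 \<in> {0,1}" "c2 \<in> {0,1}" "c0 + c1 + c2 \<ge> 2"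
    and "d0 \<in> {0,1}" "d1 \<in> {0,1}" "d2 \<in> {0,1}" "d0 + d1 + d2 \<ge> 2"
    and "\<bar>a\<bar> + c0 = \<bar>b\<bar> + d0" "\<bar>a - 1\<bar> + c1 = \<bar>b - 1\<bar> + d1" "\<bar>a - 2\<bar> + c2 = \<bar>b - 2\<bar> + d2"
  shows "a = b"
  using assms by auto

lemma diagonal_separates_layers:
  assumes "\<And>i::nat. i \<le> 2 \<Longrightarrow> pk_dist (a, v) (int i, i) = pk_dist (b, w) (int i, i)"
  shows "a = b"
proof -
  define c :: "nat \<Rightarrow> nat \<Rightarrow> int" where "c x i = (if x = i then 0 else 1)" for x i
  have eq: "\<bar>a - int i\<bar> + c v i = \<bar>b - int i\<bar> + c w i" if "i \<le> 2" for i
    using assms[OF that] by (simp add: pk_dist_def c_def split: if_splits)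
  have bit: "c x i \<in> {0, 1}" for x i by (simp add: c_def)
  have two: "c x 0 + c x 1 + c x 2 \<ge> 2" for x by (simp add: c_def)
  show ?thesis
  proof (rule layer_determined[OF bit bit bit two bit bit bit two])
    show "\<bar>a\<bar> + c v 0 = \<bar>b\<bar> + c w 0" using eq[of 0] by simp
    show "\<bar>a - 1\<bar> + c v 1 = \<bar>b - 1\<bar> + c w 1" using eq[of 1] by simp
    show "\<bar>a - 2\<bar> + c v 2 = \<bar>b - 2\<bar> + c w 2" using eq[of 2] by simp
  qed
qed

text \<open>Same-layer vertices are resolved by the landmark in one of their columns;
  different layers are handled by the previous lemma, which needs n - 2 \<ge> 2.\<close>
lemma diagonal_resolving:
  assumes n: "n \<ge> 4"
  shows "resolving_set (PK_V n) (PK_E n) (diagonal n)"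
  unfolding resolving_set_def
proof (intro conjI ballI impI)
  have landmark: "(int i, i) \<in> diagonal n" "(int i, i) \<in> PK_V n" if "i \<le> n - 2" for i
    using that n by (auto simp: diagonal_def PK_V_iff)
  then show "diagonal n \<subseteq> PK_V n" by (auto simp: diagonal_def)
  fix p q assume p: "p \<in> PK_V n" and q: "q \<in> PK_V n" and "p \<noteq> q"
  obtain a v b w where pq: "p = (a, v)" "q = (b, w)" by (cases p, cases q)
  show "\<exists>x\<in>diagonal n. resolves (PK_E n) x p q"
  proof (rule ccontr)
    assume "\<not> ?thesis"
    then have same: "pk_dist (a, v) (int i, i) = pk_dist (b, w) (int i, i)" if "i \<le> n - 2" for i
      using landmark[OF that] p q gdist_PK pq by (fastforce simp: resolves_def)
    have "a = b" by (rule diagonal_separates_layers, rule same) (use n in simp)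
    with \<open>p \<noteq> q\<close> pq have "v \<noteq> w" by simp
    \<comment> \<open>two distinct columns below n cannot both be n - 1, so one carries a landmark\<close>
    moreover have "v \<le> n - 2 \<or> w \<le> n - 2" using p q pq \<open>v \<noteq> w\<close> by (auto simp: PK_V_iff)
    ultimately show False using same[of v] same[of w] \<open>a = b\<close> by (auto simp: pk_dist_def)
  qed
qed

text \<open>Two vertices of layer 0 in landmark-free columns are equidistant from every
  landmark, so a resolving set leaves at most one column of K_n empty.\<close>
lemma resolving_misses_one_column:
  assumes res: "resolving_set (PK_V n) (PK_E n) S"
  shows "card ({0..<n} - snd ` S) \<le> 1"
proof (rule ccontr)
  assume "\<not> ?thesis"
  then obtain v w where vw: "v \<in> {0..<n} - snd ` S" "w \<in> {0..<n} - snd ` S" "v \<noteq> w"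
    by (metis One_nat_def card_le_Suc0_iff_eq finite_Diff finite_atLeastLessThan)
  have V: "(0, v) \<in> PK_V n" "(0, w) \<in> PK_V n" using vw by (simp_all add: PK_V_iff)
  then obtain x where x: "x \<in> S" "resolves (PK_E n) x (0, v) (0, w)"
    using res vw(3) unfolding resolving_set_def by blast
  have "x \<in> PK_V n" using res x(1) by (auto simp: resolving_set_def)
  moreover have "snd x \<noteq> v" "snd x \<noteq> w" using x(1) vw by force+
  ultimately show False using x(2) V by (simp add: resolves_def gdist_PK pk_dist_def)
qed

lemma resolving_card_lower:
  assumes res: "resolving_set (PK_V n) (PK_E n) S" and fin: "finite S"
  shows "n - 1 \<le> card S"
proof -
  have sub: "snd ` S \<subseteq> {0..<n}" using res by (auto simp: resolving_set_def PK_V_iff)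
  then have "card (snd ` S) \<le> n" using card_mono[OF _ sub] by simp
  moreover have "card ({0..<n} - snd ` S) = n - card (snd ` S)"
    using sub by (simp add: card_Diff_subset finite_subset)
  ultimately show ?thesis
    using card_image_le[OF fin, of snd] resolving_misses_one_column[OF res] by linarith
qed

theorem proposition9:
  fixes n :: nat
  assumes "n \<ge> 4"
  shows "metric_dim (cprod_V P2inf_V (K_V n)) (cprod_E P2inf_V P2inf_E (K_V n) (K_E n))
           = enat (n - 1)
       \<and> metric_basis (cprod_V P2inf_V (K_V n)) (cprod_E P2inf_V P2inf_E (K_V n) (K_E n))
           {(int i, i) | i. i \<le> n - 2}"
proof -
  have "resolving_set (PK_V n) (PK_E n) (diagonal n)" using assms by (rule diagonal_resolving)
  moreover have "finite (diagonal n)" by (simp add: diagonal_image)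
  moreover have "card (diagonal n) = n - 1" using assms by (simp add: card_diagonal)
  ultimately show ?thesis
    using metric_basisI[of "PK_V n" "PK_E n" "diagonal n"] resolving_card_lower
    by (simp add: diagonal_def)
qed

end
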